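(* Let $(X,\tau)$ be a $\mathbb{B}$-topological space and $\theta\in\mathbb{B}^X$. Then $\theta$ is compact in $(X,\tau)$ if and only if $\theta[tt]$ is a compact subset of the topological space $(X,\tau[tt])$ and $\theta[ff]$ is a compact subset of the topological space $(X,\tau[ff])$.
   Context: $\mathbb{B}=\{0,1,tt,ff\}$ is the four-element Boolean algebra with bottom $0$, top $1$, and $tt,ff$ incomparable and complements of each other; $a\to b=\neg a\vee b$. $\mathbb{B}^X$ is the set of maps $X\to\mathbb{B}$ with pointwise order and operations; for $\lambda\in\mathbb{B}^X$ and $b\in\mathbb{B}$, $\lambda[b]=\{x\in X:\lambda(x)\ge b\}$. A $\mathbb{B}$-topology on $X$ is a subset $\tau\subseteq\mathbb{B}^X$ containing all constant maps and closed under arbitrary pointwise joins and finite pointwise meets; $\tau[tt]=\{\lambda[tt]:\lambda\in\tau\}$ and $\tau[ff]=\{\lambda[ff]:\lambda\in\tau\}$ are topologies on $X$. $\mathrm{sub}_X(\lambda,\mu)=\bigwedge_{x\in X}(\lambda(x)\to\mu(x))$. $\theta\in\mathbb{B}^X$ is compact if for every pointwise-directed family $\Lambda\subseteq\tau$, $\mathrm{sub}_X(\theta,\bigvee\Lambda)=\bigvee_{\lambda\in\Lambda}\mathrm{sub}_X(\theta,\lambda)$. *)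

theory Defs
  imports "HOL-Analysis.Analysis"
begin

datatype B4 = Bot | Top | TT | FF

fun bleq :: "B4 \<Rightarrow> B4 \<Rightarrow> bool" where
  "bleq Bot _ = True"
| "bleq _ Top = True"
| "bleq TT TT = True"
| "bleq FF FF = True"
| "bleq _ _ = False"

fun bneg :: "B4 \<Rightarrow> B4" where
  "bneg Bot = Top" | "bneg Top = Bot" | "bneg TT = FF" | "bneg FF = TT"

definition bSup :: "B4 set \<Rightarrow> B4" where
  "bSup S = (if Top \<in> S \<or> (TT \<in> S \<and> FF \<in> S) then Top
             else if TT \<in> S then TT else if FF \<in> S then FF else Bot)"

definition bInf :: "B4 set \<Rightarrow> B4" where
  "bInf S = (if Bot \<in> S \<or> (TT \<in> S \<and> FF \<in> S) then Bot
             else if TT \<in> S then TT else if FF \<in> S then FF else Top)"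

definition bjoin :: "B4 \<Rightarrow> B4 \<Rightarrow> B4" where "bjoin a b = bSup {a, b}"
definition bmeet :: "B4 \<Rightarrow> B4 \<Rightarrow> B4" where "bmeet a b = bInf {a, b}"
definition bimp :: "B4 \<Rightarrow> B4 \<Rightarrow> B4" where "bimp a b = bjoin (bneg a) b"

text \<open>Pointwise order, cuts, B-topologies on a carrier X (maps outside X are irrelevant;
  we consider maps X \<rightarrow> B as functions extensional to X, value Bot outside).\<close>
definition Bmaps :: "'a set \<Rightarrow> ('a \<Rightarrow> B4) set" where
  "Bmaps X = {f. \<forall>x. x \<notin> X \<longrightarrow> f x = Bot}"

definition pleq :: "'a set \<Rightarrow> ('a \<Rightarrow> B4) \<Rightarrow> ('a \<Rightarrow> B4) \<Rightarrow> bool" where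
  "pleq X f g \<longleftrightarrow> (\<forall>x\<in>X. bleq (f x) (g x))"

definition pSup :: "'a set \<Rightarrow> ('a \<Rightarrow> B4) set \<Rightarrow> ('a \<Rightarrow> B4)" where
  "pSup X F = (\<lambda>x. if x \<in> X then bSup ((\<lambda>f. f x) ` F) else Bot)"

definition pmeet :: "'a set \<Rightarrow> ('a \<Rightarrow> B4) \<Rightarrow> ('a \<Rightarrow> B4) \<Rightarrow> ('a \<Rightarrow> B4)" where
  "pmeet X f g = (\<lambda>x. if x \<in> X then bmeet (f x) (g x) else Bot)"

definition pconst :: "'a set \<Rightarrow> B4 \<Rightarrow> ('a \<Rightarrow> B4)" where
  "pconst X b = (\<lambda>x. if x \<in> X then b else Bot)"

definition cut :: "'a set \<Rightarrow> ('a \<Rightarrow> B4) \<Rightarrow> B4 \<Rightarrow> 'a set" where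
  "cut X f b = {x\<in>X. bleq b (f x)}"

definition is_Btopology :: "'a set \<Rightarrow> ('a \<Rightarrow> B4) set \<Rightarrow> bool" where
  "is_Btopology X \<tau> \<longleftrightarrow>
     \<tau> \<subseteq> Bmaps X \<and>
     (\<forall>b. pconst X b \<in> \<tau>) \<and>
     (\<forall>F. F \<subseteq> \<tau> \<longrightarrow> pSup X F \<in> \<tau>) \<and>
     (\<forall>f\<in>\<tau>. \<forall>g\<in>\<tau>. pmeet X f g \<in> \<tau>)"

definition cut_top :: "'a set \<Rightarrow> ('a \<Rightarrow> B4) set \<Rightarrow> B4 \<Rightarrow> 'a topology" where
  "cut_top X \<tau> b = topology (\<lambda>U. U \<in> (\<lambda>f. cut X f b) ` \<tau>)"

definition subX :: "'a set \<Rightarrow> ('a \<Rightarrow> B4) \<Rightarrow> ('a \<Rightarrow> B4) \<Rightarrow> B4" where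
  "subX X f g = bInf ((\<lambda>x. bimp (f x) (g x)) ` X)"

definition pdirected :: "'a set \<Rightarrow> ('a \<Rightarrow> B4) set \<Rightarrow> bool" where
  "pdirected X F \<longleftrightarrow> F \<noteq> {} \<and> (\<forall>f\<in>F. \<forall>g\<in>F. \<exists>h\<in>F. pleq X f h \<and> pleq X g h)"

definition Bcompact :: "'a set \<Rightarrow> ('a \<Rightarrow> B4) set \<Rightarrow> ('a \<Rightarrow> B4) \<Rightarrow> bool" where
  "Bcompact X \<tau> \<theta> \<longleftrightarrow>
     (\<forall>\<Lambda>. \<Lambda> \<subseteq> \<tau> \<and> pdirected X \<Lambda> \<longrightarrow>
        subX X \<theta> (pSup X \<Lambda>) = bSup ((\<lambda>l. subX X \<theta> l) ` \<Lambda>))"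

end

theory Submission
  imports Defs
begin

text \<open>For b \<in> {tt, ff} the cut f \<mapsto> f[b] turns pointwise joins into unions, meets into
  intersections, and makes sub(\<theta>, \<lambda>) \<ge> b equivalent to \<theta>[b] \<subseteq> \<lambda>[b]. Since an element of \<B>
  is determined by whether it lies above tt and above ff, compactness of \<theta> splits into two
  conditions, one per level: every pointwise-directed \<Lambda> \<subseteq> \<tau> whose b-cuts cover \<theta>[b] has
  a single member whose b-cut does. At each level this is ordinary compactness of \<theta>[b] in
  \<tau>[b]: directed families of cuts are directed open covers, and conversely a finite-join
  closure of an open cover is a directed family in \<tau>.\<close>

lemma bleq_TT_iff: "bleq TT s \<longleftrightarrow> s = TT \<or> s = Top"
  by (cases s) auto

lemma bleq_FF_iff: "bleq FF s \<longleftrightarrow> s = FF \<or> s = Top"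
  by (cases s) auto

lemma B4_eq_iff: "x = y \<longleftrightarrow> (\<forall>b\<in>{TT, FF}. bleq b x \<longleftrightarrow> bleq b y)"
  by (cases x; cases y) auto

lemma bleq_iff_levels: "bleq x y \<longleftrightarrow> (\<forall>b\<in>{TT, FF}. bleq b x \<longrightarrow> bleq b y)"
  by (cases x; cases y) auto

lemma bleq_bSup_iff: "b \<in> {TT, FF} \<Longrightarrow> bleq b (bSup S) \<longleftrightarrow> (\<exists>s\<in>S. bleq b s)"
  unfolding bSup_def by (auto simp: bleq_TT_iff bleq_FF_iff)

lemma bleq_bInf_iff: "b \<in> {TT, FF} \<Longrightarrow> bleq b (bInf S) \<longleftrightarrow> (\<forall>s\<in>S. bleq b s)"
  unfolding bInf_def by (cases b; auto simp: bleq_TT_iff bleq_FF_iff; metis B4.exhaust)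

lemma bleq_bmeet_iff: "b \<in> {TT, FF} \<Longrightarrow> bleq b (bmeet x y) \<longleftrightarrow> bleq b x \<and> bleq b y"
  unfolding bmeet_def by (simp add: bleq_bInf_iff)

lemma bleq_bimp_iff: "b \<in> {TT, FF} \<Longrightarrow> bleq b (bimp x y) \<longleftrightarrow> (bleq b x \<longrightarrow> bleq b y)"
  unfolding bimp_def bjoin_def by (simp add: bleq_bSup_iff) (cases b; cases x; auto)

lemma cut_pSup: "b \<in> {TT, FF} \<Longrightarrow> cut X (pSup X F) b = (\<Union>f\<in>F. cut X f b)"
  unfolding cut_def pSup_def by (auto simp: bleq_bSup_iff)

lemma cut_pmeet: "b \<in> {TT, FF} \<Longrightarrow> cut X (pmeet X f g) b = cut X f b \<inter> cut X g b"
  unfolding cut_def pmeet_def by (auto simp: bleq_bmeet_iff)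

lemma cut_pconst_Top: "b \<in> {TT, FF} \<Longrightarrow> cut X (pconst X Top) b = X"
  unfolding cut_def pconst_def by auto

lemma cut_subset: "cut X f b \<subseteq> X"
  unfolding cut_def by blast

lemma cut_mono: "b \<in> {TT, FF} \<Longrightarrow> pleq X f g \<Longrightarrow> cut X f b \<subseteq> cut X g b"
  unfolding pleq_def cut_def using bleq_iff_levels by blast

lemma bleq_subX_iff: "b \<in> {TT, FF} \<Longrightarrow> bleq b (subX X f g) \<longleftrightarrow> cut X f b \<subseteq> cut X g b"
  unfolding subX_def cut_def by (auto simp: bleq_bInf_iff bleq_bimp_iff)

lemma pleq_pSup_mono: "F \<subseteq> G \<Longrightarrow> pleq X (pSup X F) (pSup X G)"
  unfolding pleq_def pSup_def by (subst bleq_iff_levels) (auto simp: bleq_bSup_iff)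

lemma
  assumes "is_Btopology X \<tau>"
  shows is_Btopology_pconst: "pconst X c \<in> \<tau>"
    and is_Btopology_pSup: "F \<subseteq> \<tau> \<Longrightarrow> pSup X F \<in> \<tau>"
    and is_Btopology_pmeet: "f \<in> \<tau> \<Longrightarrow> g \<in> \<tau> \<Longrightarrow> pmeet X f g \<in> \<tau>"
  using assms unfolding is_Btopology_def by auto

lemma istopology_cuts:
  assumes \<tau>: "is_Btopology X \<tau>" and b: "b \<in> {TT, FF}"
  shows "istopology (\<lambda>U. U \<in> (\<lambda>f. cut X f b) ` \<tau>)"
  unfolding istopology_def
proof safe
  fix f g assume "f \<in> \<tau>" "g \<in> \<tau>"
  then have "pmeet X f g \<in> \<tau>"
    by (rule is_Btopology_pmeet[OF \<tau>])
  then show "cut X f b \<inter> cut X g b \<in> (\<lambda>f. cut X f b) ` \<tau>"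
    by (metis cut_pmeet[OF b] image_eqI)
next
  fix \<U> assume "\<forall>U\<in>\<U>. U \<in> (\<lambda>f. cut X f b) ` \<tau>"
  then obtain g where g: "\<And>U. U \<in> \<U> \<Longrightarrow> g U \<in> \<tau> \<and> cut X (g U) b = U"
    by (metis imageE)
  then have "pSup X (g ` \<U>) \<in> \<tau>"
    by (intro is_Btopology_pSup[OF \<tau>]) blast
  moreover have "cut X (pSup X (g ` \<U>)) b = \<Union>\<U>"
    using g by (simp add: cut_pSup[OF b])
  ultimately show "\<Union>\<U> \<in> (\<lambda>f. cut X f b) ` \<tau>"
    by (metis image_eqI)
qed

lemma openin_cut_top_iff:
  assumes "is_Btopology X \<tau>" and "b \<in> {TT, FF}"
  shows "openin (cut_top X \<tau> b) U \<longleftrightarrow> U \<in> (\<lambda>f. cut X f b) ` \<tau>"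
  unfolding cut_top_def topology_inverse'[OF istopology_cuts[OF assms]] ..

lemma topspace_cut_top:
  assumes \<tau>: "is_Btopology X \<tau>" and b: "b \<in> {TT, FF}"
  shows "topspace (cut_top X \<tau> b) = X"
proof
  have "pconst X Top \<in> \<tau>"
    by (rule is_Btopology_pconst[OF \<tau>])
  then have "openin (cut_top X \<tau> b) (cut X (pconst X Top) b)"
    unfolding openin_cut_top_iff[OF assms] by (rule imageI)
  then show "X \<subseteq> topspace (cut_top X \<tau> b)"
    unfolding cut_pconst_Top[OF b] by (rule openin_subset)
  show "topspace (cut_top X \<tau> b) \<subseteq> X"
    unfolding topspace_def
  proof (rule Union_least)
    fix U assume "U \<in> {U. openin (cut_top X \<tau> b) U}"
    then obtain f where "U = cut X f b"
      unfolding mem_Collect_eq openin_cut_top_iff[OF assms] by blast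
    then show "U \<subseteq> X"
      by (simp only: cut_subset)
  qed
qed

lemma directed_finite_Union_bound:
  assumes "finite \<F>" "\<F> \<subseteq> \<U>" "\<U> \<noteq> {}"
    and directed: "\<And>U V. U \<in> \<U> \<Longrightarrow> V \<in> \<U> \<Longrightarrow> \<exists>W\<in>\<U>. U \<union> V \<subseteq> W"
  shows "\<exists>W\<in>\<U>. \<Union>\<F> \<subseteq> W"
  using assms(1,2)
proof (induction \<F> rule: finite_induct)
  case empty
  show ?case
    using \<open>\<U> \<noteq> {}\<close> by auto
next
  case (insert U \<F>)
  have "U \<in> \<U>" and "\<F> \<subseteq> \<U>"
    using insert.prems by simp_all
  obtain V where "V \<in> \<U>" "\<Union>\<F> \<subseteq> V"
    using insert.IH[OF \<open>\<F> \<subseteq> \<U>\<close>] by (rule bexE)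
  moreover obtain W where "W \<in> \<U>" "U \<union> V \<subseteq> W"
    using directed[OF \<open>U \<in> \<U>\<close> \<open>V \<in> \<U>\<close>] by (rule bexE)
  ultimately show ?case
    by auto
qed

lemma compactin_directed_cover:
  assumes "compactin T S" "\<And>U. U \<in> \<U> \<Longrightarrow> openin T U" "S \<subseteq> \<Union>\<U>" "\<U> \<noteq> {}"
    and "\<And>U V. U \<in> \<U> \<Longrightarrow> V \<in> \<U> \<Longrightarrow> \<exists>W\<in>\<U>. U \<union> V \<subseteq> W"
  shows "\<exists>W\<in>\<U>. S \<subseteq> W"
proof -
  obtain \<F> where "finite \<F>" "\<F> \<subseteq> \<U>" "S \<subseteq> \<Union>\<F>"
    using compactinD[OF assms(1-3)] by auto
  moreover obtain W where "W \<in> \<U>" "\<Union>\<F> \<subseteq> W"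
    using directed_finite_Union_bound[OF \<open>finite \<F>\<close> \<open>\<F> \<subseteq> \<U>\<close> assms(4,5)] by (rule bexE)
  ultimately show ?thesis
    by (meson order_trans)
qed

definition directed_level_compact :: "'a set \<Rightarrow> ('a \<Rightarrow> B4) set \<Rightarrow> ('a \<Rightarrow> B4) \<Rightarrow> B4 \<Rightarrow> bool" where
  "directed_level_compact X \<tau> \<theta> b \<longleftrightarrow>
     (\<forall>\<Lambda>. \<Lambda> \<subseteq> \<tau> \<longrightarrow> pdirected X \<Lambda> \<longrightarrow>
        cut X \<theta> b \<subseteq> (\<Union>l\<in>\<Lambda>. cut X l b) \<longrightarrow> (\<exists>l\<in>\<Lambda>. cut X \<theta> b \<subseteq> cut X l b))"

lemma Bcompact_iff_levels:
  "Bcompact X \<tau> \<theta> \<longleftrightarrow> directed_level_compact X \<tau> \<theta> TT \<and> directed_level_compact X \<tau> \<theta> FF"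
proof -
  have level: "(bleq b (subX X \<theta> (pSup X \<Lambda>)) \<longleftrightarrow> bleq b (bSup (subX X \<theta> ` \<Lambda>)))
      \<longleftrightarrow> (cut X \<theta> b \<subseteq> (\<Union>l\<in>\<Lambda>. cut X l b) \<longrightarrow> (\<exists>l\<in>\<Lambda>. cut X \<theta> b \<subseteq> cut X l b))"
    if b: "b \<in> {TT, FF}" for b \<Lambda>
    by (auto simp: bleq_subX_iff[OF b] bleq_bSup_iff[OF b] cut_pSup[OF b])
  show ?thesis
    unfolding Bcompact_def directed_level_compact_def B4_eq_iff[of "subX X \<theta> _"]
    by (simp add: level all_conj_distrib imp_conjR imp_conjL)
qed

lemma compactin_cut_top_imp_directed_level_compact:
  assumes \<tau>: "is_Btopology X \<tau>" and b: "b \<in> {TT, FF}"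
    and compact: "compactin (cut_top X \<tau> b) (cut X \<theta> b)"
  shows "directed_level_compact X \<tau> \<theta> b"
  unfolding directed_level_compact_def
proof (intro allI impI)
  fix \<Lambda> assume "\<Lambda> \<subseteq> \<tau>" and directed: "pdirected X \<Lambda>"
    and cover: "cut X \<theta> b \<subseteq> (\<Union>l\<in>\<Lambda>. cut X l b)"
  have "\<exists>W\<in>(\<lambda>l. cut X l b) ` \<Lambda>. cut X \<theta> b \<subseteq> W"
  proof (rule compactin_directed_cover[OF compact])
    show "openin (cut_top X \<tau> b) U" if "U \<in> (\<lambda>l. cut X l b) ` \<Lambda>" for U
      using that \<open>\<Lambda> \<subseteq> \<tau>\<close> by (auto simp: openin_cut_top_iff[OF \<tau> b])
    show "(\<lambda>l. cut X l b) ` \<Lambda> \<noteq> {}"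
      using directed unfolding pdirected_def by simp
    show "\<exists>W\<in>(\<lambda>l. cut X l b) ` \<Lambda>. U \<union> V \<subseteq> W"
      if U: "U \<in> (\<lambda>l. cut X l b) ` \<Lambda>" and V: "V \<in> (\<lambda>l. cut X l b) ` \<Lambda>" for U V
    proof -
      obtain f h where "f \<in> \<Lambda>" "h \<in> \<Lambda>" "U = cut X f b" "V = cut X h b"
        using U V by blast
      then obtain k where "k \<in> \<Lambda>" "pleq X f k" "pleq X h k"
        using directed unfolding pdirected_def by blast
      then show ?thesis
        using \<open>U = cut X f b\<close> \<open>V = cut X h b\<close> cut_mono[OF b] by blast
    qed
  qed (use cover in auto)
  then show "\<exists>l\<in>\<Lambda>. cut X \<theta> b \<subseteq> cut X l b"
    by blast
qed

lemma directed_level_compact_imp_compactin_cut_top: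
  assumes \<tau>: "is_Btopology X \<tau>" and b: "b \<in> {TT, FF}"
    and level: "directed_level_compact X \<tau> \<theta> b"
  shows "compactin (cut_top X \<tau> b) (cut X \<theta> b)"
  unfolding compactin_def topspace_cut_top[OF \<tau> b]
proof (intro conjI cut_subset allI impI)
  fix \<U> assume "(\<forall>U\<in>\<U>. openin (cut_top X \<tau> b) U) \<and> cut X \<theta> b \<subseteq> \<Union>\<U>"
  then have cover: "cut X \<theta> b \<subseteq> \<Union>\<U>"
    and "\<exists>g. \<forall>U\<in>\<U>. g U \<in> \<tau> \<and> cut X (g U) b = U"
    by (auto simp: openin_cut_top_iff[OF \<tau> b] image_iff intro!: bchoice)
  then obtain g where g: "\<And>U. U \<in> \<U> \<Longrightarrow> g U \<in> \<tau> \<and> cut X (g U) b = U"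
    by blast
  have cut_join: "cut X (pSup X (g ` \<F>)) b = \<Union>\<F>" if "\<F> \<subseteq> \<U>" for \<F>
    using g that by (auto simp: cut_pSup[OF b])
  define \<Lambda> where "\<Lambda> = (\<lambda>\<F>. pSup X (g ` \<F>)) ` {\<F>. finite \<F> \<and> \<F> \<subseteq> \<U>}"
  have "\<Lambda> \<subseteq> \<tau>"
    using g unfolding \<Lambda>_def by (auto intro!: is_Btopology_pSup[OF \<tau>])
  moreover have "pdirected X \<Lambda>"
    unfolding pdirected_def
  proof (intro conjI ballI)
    show "\<Lambda> \<noteq> {}"
      unfolding \<Lambda>_def by blast
    fix f h assume "f \<in> \<Lambda>" "h \<in> \<Lambda>"
    then obtain F H where "finite F" "F \<subseteq> \<U>" "f = pSup X (g ` F)"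
      and "finite H" "H \<subseteq> \<U>" "h = pSup X (g ` H)"
      unfolding \<Lambda>_def by auto
    then show "\<exists>k\<in>\<Lambda>. pleq X f k \<and> pleq X h k"
      unfolding \<Lambda>_def by (intro bexI[of _ "pSup X (g ` (F \<union> H))"]) (auto intro!: pleq_pSup_mono)
  qed
  moreover have "cut X \<theta> b \<subseteq> (\<Union>l\<in>\<Lambda>. cut X l b)"
  proof
    fix x assume "x \<in> cut X \<theta> b"
    then obtain U where "U \<in> \<U>" "x \<in> U" using cover by blast
    then show "x \<in> (\<Union>l\<in>\<Lambda>. cut X l b)"
      unfolding \<Lambda>_def using cut_join[of "{U}"] by (auto intro!: bexI[of _ "{U}"])
  qed
  ultimately obtain l where "l \<in> \<Lambda>" "cut X \<theta> b \<subseteq> cut X l b"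
    using level unfolding directed_level_compact_def by blast
  then show "\<exists>\<F>. finite \<F> \<and> \<F> \<subseteq> \<U> \<and> cut X \<theta> b \<subseteq> \<Union>\<F>"
    unfolding \<Lambda>_def using cut_join by auto
qed

theorem mainTheorem3:
  fixes X :: "'a set" and \<tau> :: "('a \<Rightarrow> B4) set" and \<theta> :: "'a \<Rightarrow> B4"
  assumes "is_Btopology X \<tau>" and "\<theta> \<in> Bmaps X"
  shows "Bcompact X \<tau> \<theta> \<longleftrightarrow>
           compactin (cut_top X \<tau> TT) (cut X \<theta> TT) \<and>
           compactin (cut_top X \<tau> FF) (cut X \<theta> FF)"
proof -
  have "directed_level_compact X \<tau> \<theta> b \<longleftrightarrow> compactin (cut_top X \<tau> b) (cut X \<theta> b)"
    if "b \<in> {TT, FF}" for b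
    using compactin_cut_top_imp_directed_level_compact[OF assms(1) that]
      directed_level_compact_imp_compactin_cut_top[OF assms(1) that] by blast
  then show ?thesis
    unfolding Bcompact_iff_levels by simp
qed

end
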